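(* Let $\mathsf r:\phi\to\psi$ be a non-trivial linear inference among a nonempty set of variables $\mathcal{V}\neq\emptyset$ (the variables occurring in $\mathsf r$). Then there is a constant-free, negation-free, non-trivial linear inference $\mathsf r':\phi'\to\psi'$ with $\phi',\psi'$ linear formulae on $\mathcal{V}$, such that $\mathsf r$ is $\{\mathsf{s},\mathsf{m},\mathsf r'\}$-derivable with units.
   Context: Fix a countably infinite set of variables. Linear formulae on a finite set $\mathcal{V}$ of variables are defined inductively: - $\top,\bot$ are linear formulae on $\emptyset$. - $x$ and $\neg x$ are linear formulae on $\{x\}$. - If $\phi$ is on $\mathcal{V}_1$, $\psi$ is on $\mathcal{V}_2$ and $\mathcal{V}_1\cap\mathcal{V}_2=\emptyset$, then $\phi\lor\psi$ and $\phi\land\psi$ are on $\mathcal{V}_1\cup\mathcal{V}_2$. A formula is constant-free if it contains no $\top,\bot$, and negation-free if it contains no $\neg x$. Formulae are evaluated under Boolean assignments. A linear inference $\phi\to\psi$ is a pair of linear formulae such that every assignment satisfying $\phi$ satisfies $\psi$. An inference $\phi\to\psi$ is trivial at a variable $x$ if $\phi[\top/x]\to\psi[\bot/x]$ is valid; it is trivial if trivial at some variable, non-trivial otherwise. A congruence is an equivalence relation closed under $\land$- and $\lor$-contexts. - $\sim_{\mathsf{ac}}$ is the smallest congruence containing commutativity and associativity of $\land,\lor$. - $\sim_{\mathsf{u}}$ is the smallest congruence containing $\phi\land\top\sim\phi$, $\top\land\phi\sim\phi$, $\phi\lor\bot\sim\phi$, $\bot\lor\phi\sim\phi$, $\phi\land\bot\sim\bot$,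 $\bot\land\phi\sim\bot$, $\phi\lor\top\sim\top$, $\top\lor\phi\sim\top$. - $\sim_{\mathsf{acu}}$ is the smallest congruence containing both. For a set $S$ of linear inferences, $\to_S$ is the smallest relation containing $S$ and closed under substitution (of linear formulae for variables, keeping linearity) and contexts. $\phi\rightsquigarrow_{S\mathsf u}\psi$ means $\phi\sim_{\mathsf{acu}}\phi'\to_S\psi'\sim_{\mathsf{acu}}\psi$ for some $\phi',\psi'$. The inference $\phi\to\psi$ is $S$-derivable with units if $\phi,\psi$ are related by the reflexive-transitive closure of $\rightsquigarrow_{S\mathsf u}\cup\sim_{\mathsf{acu}}$. Switch $\mathsf{s}$ is $x\land(y\lor z)\to(x\land y)\lor z$; medial $\mathsf{m}$ is $(w\land x)\lor(y\land z)\to(w\lor y)\land(x\lor z)$. *)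

theory Defs
  imports Main
begin

datatype fm = Top | Bot | Var nat | NVar nat | And fm fm | Or fm fm

fun vars :: "fm \<Rightarrow> nat set" where
  "vars Top = {}" | "vars Bot = {}" | "vars (Var x) = {x}" | "vars (NVar x) = {x}"
| "vars (And a b) = vars a \<union> vars b" | "vars (Or a b) = vars a \<union> vars b"

fun linear :: "fm \<Rightarrow> bool" where
  "linear (And a b) = (linear a \<and> linear b \<and> vars a \<inter> vars b = {})"
| "linear (Or a b) = (linear a \<and> linear b \<and> vars a \<inter> vars b = {})"
| "linear _ = True"

definition linear_on :: "nat set \<Rightarrow> fm \<Rightarrow> bool" where
  "linear_on V phi \<longleftrightarrow> linear phi \<and> vars phi = V"

fun const_free :: "fm \<Rightarrow> bool" where
  "const_free Top = False" | "const_free Bot = False"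
| "const_free (And a b) = (const_free a \<and> const_free b)"
| "const_free (Or a b) = (const_free a \<and> const_free b)"
| "const_free _ = True"

fun neg_free :: "fm \<Rightarrow> bool" where
  "neg_free (NVar _) = False"
| "neg_free (And a b) = (neg_free a \<and> neg_free b)"
| "neg_free (Or a b) = (neg_free a \<and> neg_free b)"
| "neg_free _ = True"

fun eval :: "(nat \<Rightarrow> bool) \<Rightarrow> fm \<Rightarrow> bool" where
  "eval v Top = True" | "eval v Bot = False" | "eval v (Var x) = v x"
| "eval v (NVar x) = (\<not> v x)"
| "eval v (And a b) = (eval v a \<and> eval v b)"
| "eval v (Or a b) = (eval v a \<or> eval v b)"

fun dual :: "fm \<Rightarrow> fm" where
  "dual Top = Bot" | "dual Bot = Top" | "dual (Var x) = NVar x" | "dual (NVar x) = Var x"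
| "dual (And a b) = Or (dual a) (dual b)" | "dual (Or a b) = And (dual a) (dual b)"

fun sub :: "(nat \<Rightarrow> fm) \<Rightarrow> fm \<Rightarrow> fm" where
  "sub s Top = Top" | "sub s Bot = Bot" | "sub s (Var x) = s x"
| "sub s (NVar x) = dual (s x)"
| "sub s (And a b) = And (sub s a) (sub s b)"
| "sub s (Or a b) = Or (sub s a) (sub s b)"

definition subc :: "nat \<Rightarrow> fm \<Rightarrow> fm \<Rightarrow> fm" where
  "subc x c phi = sub (\<lambda>y. if y = x then c else Var y) phi"

definition valid_imp :: "fm \<Rightarrow> fm \<Rightarrow> bool" where
  "valid_imp phi psi \<longleftrightarrow> (\<forall>v. eval v phi \<longrightarrow> eval v psi)"

definition lin_inf :: "fm \<Rightarrow> fm \<Rightarrow> bool" where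
  "lin_inf phi psi \<longleftrightarrow> linear phi \<and> linear psi \<and> valid_imp phi psi"

definition trivial_at :: "fm \<Rightarrow> fm \<Rightarrow> nat \<Rightarrow> bool" where
  "trivial_at phi psi x \<longleftrightarrow> valid_imp (subc x Top phi) (subc x Bot psi)"

definition trivial :: "fm \<Rightarrow> fm \<Rightarrow> bool" where
  "trivial phi psi \<longleftrightarrow> (\<exists>x \<in> vars phi \<union> vars psi. trivial_at phi psi x)"

inductive acu :: "fm \<Rightarrow> fm \<Rightarrow> bool" where
  refl: "acu a a"
| sym: "acu a b \<Longrightarrow> acu b a"
| trans: "acu a b \<Longrightarrow> acu b c \<Longrightarrow> acu a c"
| ctx_and_l: "acu a b \<Longrightarrow> acu (And a c) (And b c)"
| ctx_and_r: "acu a b \<Longrightarrow> acu (And c a) (And c b)"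
| ctx_or_l: "acu a b \<Longrightarrow> acu (Or a c) (Or b c)"
| ctx_or_r: "acu a b \<Longrightarrow> acu (Or c a) (Or c b)"
| comm_and: "acu (And a b) (And b a)"
| comm_or: "acu (Or a b) (Or b a)"
| assoc_and: "acu (And (And a b) c) (And a (And b c))"
| assoc_or: "acu (Or (Or a b) c) (Or a (Or b c))"
| and_top_r: "acu (And a Top) a"
| and_top_l: "acu (And Top a) a"
| or_bot_r: "acu (Or a Bot) a"
| or_bot_l: "acu (Or Bot a) a"
| and_bot_r: "acu (And a Bot) Bot"
| and_bot_l: "acu (And Bot a) Bot"
| or_top_r: "acu (Or a Top) Top"
| or_top_l: "acu (Or Top a) Top"

inductive rewr :: "(fm \<times> fm) set \<Rightarrow> fm \<Rightarrow> fm \<Rightarrow> bool" for S where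
  base: "(a, b) \<in> S \<Longrightarrow> rewr S a b"
| subst: "rewr S a b \<Longrightarrow> linear (sub s a) \<Longrightarrow> linear (sub s b) \<Longrightarrow> rewr S (sub s a) (sub s b)"
| ctx_and_l: "rewr S a b \<Longrightarrow> linear (And a c) \<Longrightarrow> linear (And b c) \<Longrightarrow> rewr S (And a c) (And b c)"
| ctx_and_r: "rewr S a b \<Longrightarrow> linear (And c a) \<Longrightarrow> linear (And c b) \<Longrightarrow> rewr S (And c a) (And c b)"
| ctx_or_l: "rewr S a b \<Longrightarrow> linear (Or a c) \<Longrightarrow> linear (Or b c) \<Longrightarrow> rewr S (Or a c) (Or b c)"
| ctx_or_r: "rewr S a b \<Longrightarrow> linear (Or c a) \<Longrightarrow> linear (Or c b) \<Longrightarrow> rewr S (Or c a) (Or c b)"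

definition rewr_u :: "(fm \<times> fm) set \<Rightarrow> fm \<Rightarrow> fm \<Rightarrow> bool" where
  "rewr_u S a b \<longleftrightarrow> (\<exists>a' b'. acu a a' \<and> rewr S a' b' \<and> acu b' b)"

definition step_u :: "(fm \<times> fm) set \<Rightarrow> fm \<Rightarrow> fm \<Rightarrow> bool" where
  "step_u S a b \<longleftrightarrow> linear a \<and> linear b \<and> (rewr_u S a b \<or> acu a b)"

definition derivable_u :: "(fm \<times> fm) set \<Rightarrow> fm \<Rightarrow> fm \<Rightarrow> bool" where
  "derivable_u S a b \<longleftrightarrow> (step_u S)\<^sup>*\<^sup>* a b"

definition switch :: "fm \<times> fm" where
  "switch = (And (Var 0) (Or (Var 1) (Var 2)), Or (And (Var 0) (Var 1)) (Var 2))"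

definition medial :: "fm \<times> fm" where
  "medial = (Or (And (Var 0) (Var 1)) (And (Var 2) (Var 3)),
             And (Or (Var 0) (Var 2)) (Or (Var 1) (Var 3)))"

end

theory Submission
  imports Defs
begin

text \<open>
  If \<open>x\<close> has no positive occurrence in \<open>\<phi>\<close>, then \<open>\<phi>\<close> is antitone in \<open>x\<close>, so
  \<open>\<phi>[\<top>/x] \<rightarrow> \<phi>[\<bottom>/x] \<rightarrow> \<psi>[\<bottom>/x]\<close> and the inference is trivial at \<open>x\<close>; dually for \<open>\<psi>\<close>.
  Hence in a non-trivial inference every variable occurs positively on both sides, and by
  linearity nowhere negatively: such an inference is already negation-free. Normalising
  away the units changes neither the semantics nor, therefore, non-triviality, and
  yields a constant-free \<open>r' : \<phi>' \<rightarrow> \<psi>'\<close> with \<open>\<phi> \<sim>\<^sub>a\<^sub>c\<^sub>u \<phi>'\<close> and \<open>\<psi> \<sim>\<^sub>a\<^sub>c\<^sub>u \<psi>'\<close>,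
  so \<open>r\<close> is a single step of \<open>r'\<close> modulo units.
\<close>

fun pos_vars :: "fm \<Rightarrow> nat set" where
  "pos_vars (Var x) = {x}"
| "pos_vars (And a b) = pos_vars a \<union> pos_vars b"
| "pos_vars (Or a b) = pos_vars a \<union> pos_vars b"
| "pos_vars _ = {}"

lemma pos_vars_subset_vars: "pos_vars f \<subseteq> vars f"
  by (induction f) auto

lemma linear_neg_free_if_vars_subset_pos_vars:
  "linear f \<Longrightarrow> vars f \<subseteq> pos_vars f \<Longrightarrow> neg_free f"
  by (induction f) (use pos_vars_subset_vars in fastforce)+

lemma eval_fun_upd_antitone:
  assumes "x \<notin> pos_vars f" and "eval (v(x := True)) f"
  shows "eval (v(x := False)) f"
  using assms by (induction f) auto

lemma eval_dual: "eval v (dual f) = (\<not> eval v f)"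
  by (induction f) auto

lemma eval_sub: "eval v (sub s f) = eval (\<lambda>y. eval v (s y)) f"
  by (induction f) (auto simp: eval_dual)

lemma eval_subc: "eval v (subc x c f) = eval (v(x := eval v c)) f"
  unfolding subc_def eval_sub by (rule arg_cong[where f = "\<lambda>u. eval u f"]) auto

lemma trivial_at_iff:
  "trivial_at phi psi x \<longleftrightarrow> (\<forall>v. eval (v(x := True)) phi \<longrightarrow> eval (v(x := False)) psi)"
  unfolding trivial_at_def valid_imp_def eval_subc by simp

lemma not_trivial_at_imp_pos_vars:
  assumes valid: "valid_imp phi psi" and nontrivial: "\<not> trivial_at phi psi x"
  shows "x \<in> pos_vars phi" and "x \<in> pos_vars psi"
proof -
  have imp: "\<And>v. eval v phi \<Longrightarrow> eval v psi"
    using valid unfolding valid_imp_def by blast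
  show "x \<in> pos_vars phi"
  proof (rule ccontr)
    assume "x \<notin> pos_vars phi"
    then have "trivial_at phi psi x"
      unfolding trivial_at_iff by (blast intro: imp eval_fun_upd_antitone)
    with nontrivial show False ..
  qed
  show "x \<in> pos_vars psi"
  proof (rule ccontr)
    assume "x \<notin> pos_vars psi"
    then have "trivial_at phi psi x"
      unfolding trivial_at_iff by (blast intro: imp eval_fun_upd_antitone)
    with nontrivial show False ..
  qed
qed

definition mk_and :: "fm \<Rightarrow> fm \<Rightarrow> fm" where
  "mk_and a b =
    (if a = Bot \<or> b = Bot then Bot else if a = Top then b else if b = Top then a else And a b)"

definition mk_or :: "fm \<Rightarrow> fm \<Rightarrow> fm" where
  "mk_or a b =
    (if a = Top \<or> b = Top then Top else if a = Bot then b else if b = Bot then a else Or a b)"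

fun unit_norm :: "fm \<Rightarrow> fm" where
  "unit_norm (And a b) = mk_and (unit_norm a) (unit_norm b)"
| "unit_norm (Or a b) = mk_or (unit_norm a) (unit_norm b)"
| "unit_norm f = f"

lemma acu_mk_and: "acu (And a b) (mk_and a b)"
  unfolding mk_and_def by (auto intro: acu.intros)

lemma acu_mk_or: "acu (Or a b) (mk_or a b)"
  unfolding mk_or_def by (auto intro: acu.intros)

lemma acu_unit_norm: "acu f (unit_norm f)"
proof (induction f)
  case (And a b)
  then have "acu (And a b) (And (unit_norm a) (unit_norm b))"
    by (meson acu.ctx_and_l acu.ctx_and_r acu.trans)
  then show ?case
    using acu_mk_and by (auto intro: acu.trans)
next
  case (Or a b)
  then have "acu (Or a b) (Or (unit_norm a) (unit_norm b))"
    by (meson acu.ctx_or_l acu.ctx_or_r acu.trans)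
  then show ?case
    using acu_mk_or by (auto intro: acu.trans)
qed (auto intro: acu.refl)

lemma eval_unit_norm: "eval v (unit_norm f) = eval v f"
  by (induction f) (auto simp: mk_and_def mk_or_def)

lemma vars_unit_norm_subset: "vars (unit_norm f) \<subseteq> vars f"
  by (induction f) (auto simp: mk_and_def mk_or_def)

lemma linear_unit_norm: "linear f \<Longrightarrow> linear (unit_norm f)"
proof (induction f)
  case (And a b)
  then show ?case
    using vars_unit_norm_subset[of a] vars_unit_norm_subset[of b] by (auto simp: mk_and_def)
next
  case (Or a b)
  then show ?case
    using vars_unit_norm_subset[of a] vars_unit_norm_subset[of b] by (auto simp: mk_or_def)
qed auto

lemma trivial_at_unit_norm:
  "trivial_at (unit_norm phi) (unit_norm psi) x \<longleftrightarrow> trivial_at phi psi x"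
  by (simp add: trivial_at_iff eval_unit_norm)

lemma unit_norm_cases: "unit_norm f = Top \<or> unit_norm f = Bot \<or> const_free (unit_norm f)"
  by (induction f) (auto simp: mk_and_def mk_or_def)

lemma const_free_unit_norm: "vars (unit_norm f) \<noteq> {} \<Longrightarrow> const_free (unit_norm f)"
  using unit_norm_cases[of f] by auto

lemma unit_norm_of_nontrivial:
  assumes valid: "valid_imp phi psi"
    and nontrivial: "\<not> trivial_at phi psi x"
  shows "x \<in> pos_vars (unit_norm phi)" and "x \<in> pos_vars (unit_norm psi)"
proof -
  have "valid_imp (unit_norm phi) (unit_norm psi)"
    using valid by (simp add: valid_imp_def eval_unit_norm)
  moreover have "\<not> trivial_at (unit_norm phi) (unit_norm psi) x"
    using nontrivial by (simp add: trivial_at_unit_norm)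
  ultimately show "x \<in> pos_vars (unit_norm phi)" and "x \<in> pos_vars (unit_norm psi)"
    by (rule not_trivial_at_imp_pos_vars)+
qed

lemma derivable_u_if_acu_instance:
  assumes "(a, b) \<in> S" and "acu phi a" and "acu psi b" and "linear phi" and "linear psi"
  shows "derivable_u S phi psi"
proof -
  have "rewr_u S phi psi"
    unfolding rewr_u_def using assms(1-3) rewr.base acu.sym by blast
  then show ?thesis
    unfolding derivable_u_def step_u_def using assms(4,5) by auto
qed

theorem proposition2p16:
  fixes phi psi :: fm
  assumes "lin_inf phi psi"
    and "\<not> trivial phi psi"
    and "vars phi \<union> vars psi \<noteq> {}"
  shows "\<exists>phi' psi'.
           linear_on (vars phi \<union> vars psi) phi' \<and> linear_on (vars phi \<union> vars psi) psi' \<and>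
           const_free phi' \<and> const_free psi' \<and> neg_free phi' \<and> neg_free psi' \<and>
           lin_inf phi' psi' \<and> \<not> trivial phi' psi' \<and>
           derivable_u {switch, medial, (phi', psi')} phi psi"
proof -
  define V where "V = vars phi \<union> vars psi"
  define phi' where "phi' = unit_norm phi"
  define psi' where "psi' = unit_norm psi"
  have linear: "linear phi" "linear psi" and valid: "valid_imp phi psi"
    using assms(1) by (auto simp: lin_inf_def)
  have nontrivial: "\<not> trivial_at phi psi x" if "x \<in> V" for x
    using assms(2) that unfolding trivial_def V_def by blast
  have pos: "V \<subseteq> pos_vars phi'" "V \<subseteq> pos_vars psi'"
    using unit_norm_of_nontrivial[OF valid nontrivial] by (auto simp: phi'_def psi'_def)
  have "vars phi' \<subseteq> V" "vars psi' \<subseteq> V"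
    using vars_unit_norm_subset unfolding phi'_def psi'_def V_def by blast+
  with pos have vars: "vars phi' = V" "vars psi' = V"
    using pos_vars_subset_vars[of phi'] pos_vars_subset_vars[of psi'] by auto
  have inference: "lin_inf phi' psi'"
    using assms(1) by (simp add: lin_inf_def valid_imp_def phi'_def psi'_def
        linear_unit_norm eval_unit_norm)
  have "\<not> trivial phi' psi'"
    using nontrivial vars by (simp add: trivial_def phi'_def psi'_def trivial_at_unit_norm)
  moreover have "const_free phi'" "const_free psi'"
    using vars assms(3) by (simp_all add: V_def phi'_def psi'_def const_free_unit_norm)
  moreover have "neg_free phi'" "neg_free psi'"
    using inference pos vars
    by (simp_all add: lin_inf_def linear_neg_free_if_vars_subset_pos_vars)
  moreover have "derivable_u {switch, medial, (phi', psi')} phi psi"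
    by (rule derivable_u_if_acu_instance[of phi' psi'])
      (simp_all add: linear acu_unit_norm phi'_def psi'_def)
  ultimately show ?thesis
    using inference vars unfolding V_def linear_on_def lin_inf_def by blast
qed

end
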